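(* Let $C$ be a kernel configuration, $\mathbb V$ a $K$-vector space and $\theta:\mathbb V\to\mathbb V$ a $C$-endomorphism which is $C$-image-complete, and let $F\subseteq K[X]_{\mathrm{irr}}^{0<C<\infty}$ be finite. Then: (1) $\mathrm{Im}(\eta)=\mathrm{Im}(F^C)$ for every $\eta\in K[X]$ with $F^C\mid\eta$ and all monic irreducible factors of $\eta$ lying in $K[X]_{\mathrm{irr}}^{C=0}\cup F$; (2) $\mathbb V=\mathrm{Im}(F^C)\oplus\mathrm{Ker}(F^C)=\mathrm{Im}(F^C)\oplus\bigoplus_{f\in F}\mathrm{Ker}(f^{C(f)})$; (3) $\mathrm{Im}(F^C)=\mathrm{Im}(F'^C)\oplus\bigoplus_{f\in F'\setminus F}\mathrm{Ker}(f^{C(f)})$ for every finite $F'$ with $F\subseteq F'\subseteq K[X]_{\mathrm{irr}}^{0<C<\infty}$; (4) $\mathrm{Im}(g^{C(g)})=\mathrm{Im}(F^C)\oplus\bigoplus_{f\in F\setminus\{g\}}\mathrm{Ker}(f^{C(f)})$ for every $g\in F$.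
   Context: $K$ is a field, $K[X]_{\mathrm{irr}}$ the set of monic irreducible polynomials of $K[X]$. For $\rho=\sum_i(\rho)_iX^i$, $\rho[\theta]=\sum_i(\rho)_i\theta^i$; $\mathrm{Ker}(\rho),\mathrm{Im}(\rho)$ are kernel and image of $\rho[\theta]$. A kernel configuration is $C=(c,d)$ with $c:K[X]_{\mathrm{irr}}\to\mathbb N\cup\{\infty\}$, $d\in\mathbb N_{>0}\cup\{\infty\}$, $d=\infty$ or $d=\sum_f\deg(f)c(f)$; $C(f)=c(f)$. $C$ is algebraic if $d<\infty$ (with $\mathrm{MiPo}(C)=\prod_ff^{C(f)}$), transcendental otherwise. $\theta$ is a $C$-endomorphism if $\mathrm{MiPo}(C)[\theta]=0$ (algebraic case), resp. $\mathrm{Ker}(f^{C(f)})=\mathrm{Ker}(f^{C(f)+1})$ for all $f$ with $C(f)<\infty$ (transcendental case). $\theta$ is $C$-image-complete if $\mathrm{Im}(f^{C(f)})=\mathrm{Im}(f^{C(f)+1})$ for all $f\in K[X]_{\mathrm{irr}}$ with $C(f)<\infty$. Notation: $K[X]_{\mathrm{irr}}^{0<C<\infty}=\{f:0<C(f)<\infty\}$, $K[X]_{\mathrm{irr}}^{C=0}=\{f:C(f)=0\}$, and for finite $F\subseteq K[X]_{\mathrm{irr}}^{0<C<\infty}$, $F^C:=\prod_{f\in F}f^{C(f)}$. *)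

theory Defs
  imports Main "HOL-Computational_Algebra.Polynomial" "HOL-Library.Extended_Nat"
begin

definition irr_monic :: "'k::field poly set" where
  "irr_monic = {f. irreducible f \<and> lead_coeff f = 1}"

definition poly_endo :: "('k::field \<Rightarrow> 'v::ab_group_add \<Rightarrow> 'v) \<Rightarrow> 'k poly \<Rightarrow> ('v \<Rightarrow> 'v) \<Rightarrow> 'v \<Rightarrow> 'v" where
  "poly_endo sc \<rho> \<theta> v = (\<Sum>i\<le>degree \<rho>. sc (coeff \<rho> i) ((\<theta> ^^ i) v))"

definition Ker_p :: "('k::field \<Rightarrow> 'v::ab_group_add \<Rightarrow> 'v) \<Rightarrow> ('v \<Rightarrow> 'v) \<Rightarrow> 'k poly \<Rightarrow> 'v set" where
  "Ker_p sc \<theta> \<rho> = {v. poly_endo sc \<rho> \<theta> v = 0}"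

definition Im_p :: "('k::field \<Rightarrow> 'v::ab_group_add \<Rightarrow> 'v) \<Rightarrow> ('v \<Rightarrow> 'v) \<Rightarrow> 'k poly \<Rightarrow> 'v set" where
  "Im_p sc \<theta> \<rho> = range (poly_endo sc \<rho> \<theta>)"

text \<open>Kernel configuration C = (c, d). The sum over all f is an enat-valued sum,
  which is infinite unless the support of c is finite; hence the formulation.\<close>
definition kernel_config :: "('k::field poly \<Rightarrow> enat) \<Rightarrow> enat \<Rightarrow> bool" where
  "kernel_config c d \<longleftrightarrow> d \<noteq> 0 \<and>
     (d = \<infinity> \<or> (finite {f \<in> irr_monic. c f \<noteq> 0} \<and>
                d = (\<Sum>f\<in>{f \<in> irr_monic. c f \<noteq> 0}. of_nat (degree f) * c f)))"

definition MiPo :: "('k::field poly \<Rightarrow> enat) \<Rightarrow> 'k poly" where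
  "MiPo c = (\<Prod>f\<in>{f \<in> irr_monic. c f \<noteq> 0}. f ^ the_enat (c f))"

definition C_endomorphism ::
  "('k::field \<Rightarrow> 'v::ab_group_add \<Rightarrow> 'v) \<Rightarrow> ('k poly \<Rightarrow> enat) \<Rightarrow> enat \<Rightarrow> ('v \<Rightarrow> 'v) \<Rightarrow> bool" where
  "C_endomorphism sc c d \<theta> \<longleftrightarrow>
     (if d < \<infinity> then (\<forall>v. poly_endo sc (MiPo c) \<theta> v = 0)
      else (\<forall>f \<in> irr_monic. c f < \<infinity> \<longrightarrow>
              Ker_p sc \<theta> (f ^ the_enat (c f)) = Ker_p sc \<theta> (f ^ (the_enat (c f) + 1))))"

definition C_image_complete ::
  "('k::field \<Rightarrow> 'v::ab_group_add \<Rightarrow> 'v) \<Rightarrow> ('k poly \<Rightarrow> enat) \<Rightarrow> ('v \<Rightarrow> 'v) \<Rightarrow> bool" where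
  "C_image_complete sc c \<theta> \<longleftrightarrow>
     (\<forall>f \<in> irr_monic. c f < \<infinity> \<longrightarrow>
        Im_p sc \<theta> (f ^ the_enat (c f)) = Im_p sc \<theta> (f ^ (the_enat (c f) + 1)))"

definition powC :: "('k::field poly \<Rightarrow> enat) \<Rightarrow> 'k poly set \<Rightarrow> 'k poly" where
  "powC c F = (\<Prod>f\<in>F. f ^ the_enat (c f))"

definition internal_direct_sum :: "'i set \<Rightarrow> ('i \<Rightarrow> 'v::ab_group_add set) \<Rightarrow> 'v set \<Rightarrow> bool" where
  "internal_direct_sum I U W \<longleftrightarrow> finite I \<and>
     W = {\<Sum>i\<in>I. u i | u. \<forall>i\<in>I. u i \<in> U i} \<and>
     (\<forall>u. (\<forall>i\<in>I. u i \<in> U i) \<and> (\<Sum>i\<in>I. u i) = 0 \<longrightarrow> (\<forall>i\<in>I. u i = 0))"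

definition direct_sum2 :: "'v::ab_group_add set \<Rightarrow> 'v set \<Rightarrow> 'v set \<Rightarrow> bool" where
  "direct_sum2 A B W \<longleftrightarrow> internal_direct_sum (UNIV :: bool set) (\<lambda>b. if b then A else B) W"

definition direct_sum_with :: "'v::ab_group_add set \<Rightarrow> 'i set \<Rightarrow> ('i \<Rightarrow> 'v set) \<Rightarrow> 'v set \<Rightarrow> bool" where
  "direct_sum_with A I U W \<longleftrightarrow>
     internal_direct_sum (insert None (Some ` I)) (\<lambda>j. case j of None \<Rightarrow> A | Some i \<Rightarrow> U i) W"

end

theory Submission
  imports Defs
begin

text \<open>
  For f in F the chains Ker(f^k) and Im(f^k) become stationary at k = C(f): for images this is
  image completeness, for kernels the definition of a C-endomorphism (transcendental case) or
  a Bezout identity between f and the cofactor of f^C(f) in MiPo(C) (algebraic case). So if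
  P = F^C divides Y, then Im(Y g) = Im Y and Ker(Y g) = Ker Y for every monic irreducible g in F;
  the same holds for Im when C(g) = 0, since then g[\<theta>] is onto. Factoring \<eta>/P into monic
  irreducibles gives (1), and taking \<eta> = P^2 gives Im(P^2) = Im P and Ker(P^2) = Ker P, i.e.
  the Fitting decomposition V = Im P \<oplus> Ker P.
  Bezout identities between the pairwise coprime f^C(f) split the kernel of a product of them
  into the kernels of the factors. For F \<subseteq> F' and Q = (F' - F)^C, the Fitting decomposition
  for PQ = F'^C restricted to Im P gives Im P = Im(PQ) \<oplus> Ker Q, hence (3); (2) and (4) are
  the cases F = {} and F = {g} of (3).
\<close>

section \<open>Coprime and monic irreducible polynomials\<close>

lemma coprime_iff_bezout:
  fixes p q :: "'a::euclidean_ring"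
  shows "coprime p q \<longleftrightarrow> (\<exists>s t. s * p + t * q = 1)"
proof
  show "coprime p q \<Longrightarrow> \<exists>s t. s * p + t * q = 1"
  proof (induction q arbitrary: p rule: measure_induct_rule[where f = euclidean_size])
    case (less q)
    show ?case
    proof (cases "q = 0")
      case True
      with less.prems obtain k where "1 = p * k"
        by (auto elim: dvdE)
      then have "k * p + 0 * q = 1"
        by (simp add: mult.commute)
      then show ?thesis
        by blast
    next
      case False
      with less.prems have "coprime q (p mod q)"
        by (simp add: coprime_commute)
      with False less.IH obtain s t where "s * q + t * (p mod q) = 1"
        using mod_size_less by blast
      then have "t * p + (s - t * (p div q)) * q = 1"
        by (simp add: minus_div_mult_eq_mod[symmetric] algebra_simps)
      then show ?thesis
        by blast
    qed
  qed
  show "coprime p q" if "\<exists>s t. s * p + t * q = 1"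
  proof (rule coprimeI)
    fix d assume "d dvd p" "d dvd q"
    with that show "is_unit d"
      by (metis dvd_add dvd_mult)
  qed
qed

lemma coprime_mult_right:
  fixes a b c :: "'a::euclidean_ring"
  assumes "coprime a b" "coprime a c"
  shows "coprime a (b * c)"
proof -
  obtain s t s' t' where "s * a + t * b = 1" "s' * a + t' * c = 1"
    using assms by (auto simp: coprime_iff_bezout)
  then have "(s * a + t * b) * (s' * a + t' * c) = 1"
    by simp
  then have "(s * s' * a + s * t' * c + t * b * s') * a + (t * t') * (b * c) = 1"
    by (simp add: algebra_simps)
  then show ?thesis
    unfolding coprime_iff_bezout by blast
qed

lemma coprime_prod_right:
  fixes a :: "'a::euclidean_ring"
  shows "(\<And>i. i \<in> A \<Longrightarrow> coprime a (g i)) \<Longrightarrow> coprime a (\<Prod>i\<in>A. g i)"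
  by (induction A rule: infinite_finite_induct) (simp_all add: coprime_mult_right)

lemma coprime_power_right:
  fixes a b :: "'a::euclidean_ring"
  shows "coprime a b \<Longrightarrow> coprime a (b ^ n)"
  using coprime_prod_right[of "{..<n}" a "\<lambda>_. b"] by simp

lemma monic_dvd_antisym:
  fixes f g :: "'k::field poly"
  assumes "lead_coeff f = 1" "lead_coeff g = 1" "f dvd g" "g dvd f"
  shows "f = g"
proof -
  obtain k where g: "g = f * k"
    using assms(3) by (elim dvdE)
  have nz: "f \<noteq> 0" "k \<noteq> 0"
    using assms(1,2) g by auto
  have "degree f + degree k \<le> degree f"
    using dvd_imp_degree_le[OF assms(4)] nz g by (simp add: degree_mult_eq)
  then have "degree k = 0"
    by simp
  then have "k = [:lead_coeff k:]"
    by (metis degree_0_id)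
  moreover have "lead_coeff k = 1"
    using assms(1,2) g by (simp add: lead_coeff_mult)
  ultimately show ?thesis
    using g by (simp add: one_pCons)
qed

lemma coprime_irr_monic:
  assumes "f \<in> irr_monic" "g \<in> irr_monic" "f \<noteq> g"
  shows "coprime f g"
proof (rule coprimeI)
  fix x assume x: "x dvd f" "x dvd g"
  from assms have irr: "irreducible f" "irreducible g" and monic: "lead_coeff f = 1" "lead_coeff g = 1"
    by (simp_all add: irr_monic_def)
  show "is_unit x"
  proof (rule ccontr)
    assume "\<not> is_unit x"
    with x irr have "f dvd x" "g dvd x"
      by (auto dest: irreducibleD')
    with x monic have "f = g"
      by (metis dvd_trans monic_dvd_antisym)
    with assms show False
      by simp
  qed
qed

lemma coprime_irr_monic_powC:
  assumes "f \<in> irr_monic" "H \<subseteq> irr_monic" "f \<notin> H"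
  shows "coprime f (powC c H)"
  unfolding powC_def
  using assms by (intro coprime_prod_right coprime_power_right coprime_irr_monic) auto

lemma coprime_powC:
  assumes "A \<subseteq> irr_monic" "B \<subseteq> irr_monic" "A \<inter> B = {}"
  shows "coprime (powC c A) (powC c B)"
  unfolding powC_def[of c A]
proof (subst coprime_commute, intro coprime_prod_right coprime_power_right)
  fix f assume "f \<in> A"
  with assms have "coprime f (powC c B)"
    by (intro coprime_irr_monic_powC) auto
  then show "coprime (powC c B) f"
    by (rule coprime_commute[THEN iffD1])
qed

lemma irr_monic_dvd_powC:
  assumes "g \<in> irr_monic" "H \<subseteq> irr_monic" "g dvd powC c H"
  shows "g \<in> H"
proof (rule ccontr)
  assume "g \<notin> H"
  with assms(1,2) have "coprime g (powC c H)"
    by (rule coprime_irr_monic_powC)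
  with assms(3) have "is_unit g"
    using coprime_common_divisor[of g "powC c H" g] by simp
  with assms(1) show False
    by (simp add: irr_monic_def irreducible_not_unit)
qed

lemma powC_nonzero: "H \<subseteq> irr_monic \<Longrightarrow> powC c H \<noteq> 0"
  by (cases "finite H") (auto simp: powC_def irr_monic_def)

lemma monic_irreducible_factorization:
  fixes r :: "'k::field poly"
  assumes "r \<noteq> 0"
  shows "\<exists>M. set_mset M \<subseteq> irr_monic \<and> r = smult (lead_coeff r) (prod_mset M)"
  using assms
proof (induction "degree r" arbitrary: r rule: less_induct)
  case less
  consider "degree r = 0" | "irreducible r" | a b where "r = a * b" "\<not> is_unit a" "\<not> is_unit b"
    using less.prems by (auto simp: irreducible_def is_unit_iff_degree)
  then show ?case
  proof cases
    case 1
    show ?thesis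
    proof (intro exI conjI)
      show "r = smult (lead_coeff r) (prod_mset {#})"
        using 1 by (metis degree_0_id prod_mset_empty smult_1_left smult_one)
    qed simp
  next
    case 2
    define g where "g = [:inverse (lead_coeff r):] * r"
    have "is_unit [:inverse (lead_coeff r):]"
      using less.prems by (simp add: is_unit_const_poly_iff dvd_field_iff)
    with 2 have "irreducible g"
      unfolding g_def by (simp only: irreducible_mult_unit_left)
    moreover have "lead_coeff g = 1" and "r = smult (lead_coeff r) g"
      using less.prems by (simp_all add: g_def)
    ultimately show ?thesis
      by (intro exI[of _ "{#g#}"]) (simp add: irr_monic_def)
  next
    case 3
    then have nz: "a \<noteq> 0" "b \<noteq> 0"
      using less.prems by auto
    with 3 have "degree a < degree r" "degree b < degree r"
      by (auto simp: degree_mult_eq is_unit_iff_degree)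
    with nz less.hyps obtain Ma Mb
      where Ma: "set_mset Ma \<subseteq> irr_monic" "a = smult (lead_coeff a) (prod_mset Ma)"
        and Mb: "set_mset Mb \<subseteq> irr_monic" "b = smult (lead_coeff b) (prod_mset Mb)"
      by meson
    have "r = smult (lead_coeff a) (prod_mset Ma) * smult (lead_coeff b) (prod_mset Mb)"
      using 3(1) Ma(2) Mb(2) by metis
    also have "\<dots> = smult (lead_coeff r) (prod_mset (Ma + Mb))"
      using 3(1) by (simp add: lead_coeff_mult mult_ac)
    finally show ?thesis
      using Ma(1) Mb(1) by (intro exI[of _ "Ma + Mb"]) auto
  qed
qed

lemma prod_mset_absorbed:
  fixes \<Phi> :: "'a::comm_monoid_mult \<Rightarrow> 'b"
  assumes "\<And>g Y. g \<in># M \<Longrightarrow> P dvd Y \<Longrightarrow> \<Phi> (Y * g) = \<Phi> Y" and "P dvd X"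
  shows "\<Phi> (X * prod_mset M) = \<Phi> X"
  using assms
proof (induction M arbitrary: X)
  case (add g M)
  then have "\<Phi> ((X * g) * prod_mset M) = \<Phi> (X * g)"
    by simp
  also have "\<dots> = \<Phi> X"
    using add.prems by simp
  finally show ?case
    by (simp add: mult_ac)
qed simp

lemma monic_factors_absorbed:
  fixes \<Phi> :: "'k::field poly \<Rightarrow> 'b"
  assumes "r \<noteq> 0" "P dvd X"
    and absorb: "\<And>g Y. g \<in> irr_monic \<Longrightarrow> g dvd r \<Longrightarrow> P dvd Y \<Longrightarrow> \<Phi> (Y * g) = \<Phi> Y"
    and smult: "\<And>a Y. a \<noteq> 0 \<Longrightarrow> \<Phi> (smult a Y) = \<Phi> Y"
  shows "\<Phi> (X * r) = \<Phi> X"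
proof -
  obtain M where M: "set_mset M \<subseteq> irr_monic" "r = smult (lead_coeff r) (prod_mset M)"
    using monic_irreducible_factorization[OF assms(1)] by blast
  have "\<Phi> (X * r) = \<Phi> (X * prod_mset M)"
    using assms(1) smult[of "lead_coeff r" "X * prod_mset M"] by (subst M(2)) simp
  also have "\<dots> = \<Phi> X"
  proof (rule prod_mset_absorbed[OF _ assms(2)])
    fix g Y assume "g \<in># M" "P dvd Y"
    moreover have "g dvd r"
      using \<open>g \<in># M\<close> by (subst M(2)) (simp add: dvd_prod_mset dvd_smult)
    ultimately show "\<Phi> (Y * g) = \<Phi> Y"
      using M(1) absorb by blast
  qed
  finally show ?thesis .
qed

section \<open>Internal direct sums\<close>

lemma direct_sum2_iff:
  "direct_sum2 A B W \<longleftrightarrow>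
     W = {a + b | a b. a \<in> A \<and> b \<in> B} \<and> (\<forall>a\<in>A. \<forall>b\<in>B. a + b = 0 \<longrightarrow> a = 0 \<and> b = 0)"
proof -
  have sum_bool: "sum x UNIV = x True + x False" for x :: "bool \<Rightarrow> 'a"
    by (simp add: UNIV_bool add.commute)
  have "{sum x UNIV | x. \<forall>i\<in>UNIV. x i \<in> (if i then A else B)} = {a + b | a b. a \<in> A \<and> b \<in> B}"
  proof (intro equalityI subsetI)
    fix v assume "v \<in> {a + b | a b. a \<in> A \<and> b \<in> B}"
    then obtain a b where "a \<in> A" "b \<in> B" "v = a + b"
      by blast
    then show "v \<in> {sum x UNIV | x. \<forall>i\<in>UNIV. x i \<in> (if i then A else B)}"
      by (intro CollectI exI[of _ "\<lambda>i. if i then a else b"]) (simp add: sum_bool)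
  next
    fix v assume "v \<in> {sum x UNIV | x. \<forall>i\<in>UNIV. x i \<in> (if i then A else B)}"
    then obtain x where x: "\<forall>i\<in>UNIV. x i \<in> (if i then A else B)" "v = sum x UNIV"
      by blast
    then have "x True \<in> A" "x False \<in> B"
      using bspec[OF x(1), of True] bspec[OF x(1), of False] by simp_all
    with x(2) show "v \<in> {a + b | a b. a \<in> A \<and> b \<in> B}"
      by (auto simp: sum_bool)
  qed
  moreover have "(\<forall>x. (\<forall>i\<in>UNIV. x i \<in> (if i then A else B)) \<and> sum x UNIV = 0 \<longrightarrow> (\<forall>i\<in>UNIV. x i = 0))
      \<longleftrightarrow> (\<forall>a\<in>A. \<forall>b\<in>B. a + b = 0 \<longrightarrow> a = 0 \<and> b = 0)"
  proof
    assume H: "\<forall>x. (\<forall>i\<in>UNIV. x i \<in> (if i then A else B)) \<and> sum x UNIV = 0 \<longrightarrow> (\<forall>i\<in>UNIV. x i = 0)"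
    show "\<forall>a\<in>A. \<forall>b\<in>B. a + b = 0 \<longrightarrow> a = 0 \<and> b = 0"
    proof (intro ballI impI)
      fix a b assume "a \<in> A" "b \<in> B" "a + b = 0"
      with spec[OF H, of "\<lambda>i. if i then a else b"] show "a = 0 \<and> b = 0"
        by (simp add: sum_bool all_bool_eq)
    qed
  qed (auto simp: sum_bool all_bool_eq)
  ultimately show ?thesis
    unfolding direct_sum2_def internal_direct_sum_def by simp
qed

lemma internal_direct_sum_insert:
  assumes "i \<notin> I" and I: "internal_direct_sum I U B" and W: "direct_sum2 (U i) B W"
  shows "internal_direct_sum (insert i I) U W"
proof -
  have sum_insert: "sum u (insert i I) = u i + sum u I" for u
    using I assms(1) by (simp add: internal_direct_sum_def)
  have "W = {sum u (insert i I) | u. \<forall>j\<in>insert i I. u j \<in> U j}"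
  proof (intro equalityI subsetI)
    fix w assume "w \<in> W"
    with W I obtain a u where "a \<in> U i" "\<forall>j\<in>I. u j \<in> U j" "w = a + sum u I"
      by (auto simp: direct_sum2_iff internal_direct_sum_def)
    moreover have "sum (u(i := a)) I = sum u I"
      using assms(1) by (intro sum.cong) auto
    ultimately show "w \<in> {sum u (insert i I) | u. \<forall>j\<in>insert i I. u j \<in> U j}"
      by (intro CollectI exI[of _ "u(i := a)"]) (simp add: sum_insert)
  qed (use W I in \<open>auto simp: direct_sum2_iff internal_direct_sum_def sum_insert\<close>)
  moreover have "\<forall>j\<in>insert i I. u j = 0"
    if "\<forall>j\<in>insert i I. u j \<in> U j" "sum u (insert i I) = 0" for u
  proof -
    have "sum u I \<in> B"
      using that I by (auto simp: internal_direct_sum_def)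
    with that W have "u i = 0" "sum u I = 0"
      by (auto simp: direct_sum2_iff sum_insert)
    with that I show ?thesis
      by (auto simp: internal_direct_sum_def)
  qed
  ultimately show ?thesis
    using I by (auto simp: internal_direct_sum_def)
qed

lemma internal_direct_sum_image:
  assumes "inj_on h I" and I: "internal_direct_sum I (\<lambda>i. U (h i)) W"
  shows "internal_direct_sum (h ` I) U W"
proof -
  have sum_image: "sum u (h ` I) = (\<Sum>i\<in>I. u (h i))" for u
    using assms(1) by (simp add: sum.reindex)
  have "W = {sum u (h ` I) | u. \<forall>j\<in>h ` I. u j \<in> U j}"
  proof (intro equalityI subsetI)
    fix w assume "w \<in> W"
    with I obtain v where v: "\<forall>i\<in>I. v i \<in> U (h i)" "w = sum v I"
      by (auto simp: internal_direct_sum_def)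
    define u where "u = (\<lambda>j. v (inv_into I h j))"
    have "u (h i) = v i" if "i \<in> I" for i
      using assms(1) that by (simp add: u_def)
    with v show "w \<in> {sum u (h ` I) | u. \<forall>j\<in>h ` I. u j \<in> U j}"
      by (intro CollectI exI[of _ u]) (auto simp: sum_image)
  qed (use I in \<open>auto simp: internal_direct_sum_def sum_image\<close>)
  with I show ?thesis
    by (auto simp: internal_direct_sum_def sum_image)
qed

lemma direct_sum_with_if_direct_sum2:
  assumes "internal_direct_sum D U B" "direct_sum2 A B W"
  shows "direct_sum_with A D U W"
  unfolding direct_sum_with_def
proof (rule internal_direct_sum_insert)
  show "internal_direct_sum (Some ` D) (case_option A U) B"
    using assms(1) by (intro internal_direct_sum_image) simp_all
qed (use assms(2) in simp_all)

section \<open>Polynomials in a linear endomorphism\<close>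

locale linear_endo = vector_space scale
  for scale :: "'k::field \<Rightarrow> 'v::ab_group_add \<Rightarrow> 'v" (infixr \<open>*s\<close> 75) +
  fixes \<theta> :: "'v \<Rightarrow> 'v"
  assumes linear_\<theta>: "Vector_Spaces.linear scale scale \<theta>"
begin

abbreviation T :: "'k poly \<Rightarrow> 'v \<Rightarrow> 'v"
  where "T p \<equiv> poly_endo scale p \<theta>"

abbreviation Ker :: "'k poly \<Rightarrow> 'v set"
  where "Ker p \<equiv> Ker_p scale \<theta> p"

abbreviation Im :: "'k poly \<Rightarrow> 'v set"
  where "Im p \<equiv> Im_p scale \<theta> p"

sublocale \<theta>: Vector_Spaces.linear scale scale \<theta>
  by (rule linear_\<theta>)

lemma T_pCons: "T (pCons a p) v = a *s v + T p (\<theta> v)"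
proof -
  have "T (pCons a p) v = (\<Sum>i\<le>Suc (degree p). coeff (pCons a p) i *s (\<theta> ^^ i) v)"
    unfolding poly_endo_def
    by (rule sum.mono_neutral_left) (auto simp: coeff_eq_0 degree_pCons_le)
  also have "\<dots> = a *s v + (\<Sum>i\<le>degree p. coeff p i *s (\<theta> ^^ Suc i) v)"
    by (subst sum.atMost_Suc_shift) (simp del: sum.atMost_Suc)
  also have "(\<Sum>i\<le>degree p. coeff p i *s (\<theta> ^^ Suc i) v) = T p (\<theta> v)"
    unfolding poly_endo_def by (simp add: funpow_Suc_right del: funpow.simps)
  finally show ?thesis .
qed

lemma T_0 [simp]: "T 0 v = 0"
  by (simp add: poly_endo_def)

lemma T_1 [simp]: "T 1 v = v"
  by (simp add: one_pCons T_pCons)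

lemma T_linear: "Vector_Spaces.linear scale scale (T p)"
proof -
  have "T p (u + v) = T p u + T p v" for u v
    by (induction p arbitrary: u v) (simp_all add: T_pCons \<theta>.add scale_right_distrib algebra_simps)
  moreover have "T p (a *s v) = a *s T p v" for a v
    by (induction p arbitrary: v) (simp_all add: T_pCons \<theta>.scale scale_right_distrib scale_left_commute)
  ultimately show ?thesis
    by (simp add: Vector_Spaces.linear_iff vector_space_axioms)
qed

sublocale T: Vector_Spaces.linear scale scale "T p" for p
  by (rule T_linear)

lemma T_\<theta>: "T p (\<theta> v) = \<theta> (T p v)"
  by (induction p arbitrary: v) (simp_all add: T_pCons \<theta>.add \<theta>.scale)

lemma T_add: "T (p + q) v = T p v + T q v"
proof (induction p arbitrary: q v)
  case (pCons a p)
  obtain b q' where "q = pCons b q'"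
    by (cases q)
  with pCons.IH[of q' "\<theta> v"] show ?case
    by (simp add: T_pCons scale_left_distrib algebra_simps)
qed simp

lemma T_smult: "T (smult a p) v = a *s T p v"
  by (induction p arbitrary: v) (simp_all add: T_pCons scale_right_distrib T.scale)

lemma T_mult: "T (p * q) v = T p (T q v)"
proof (induction p arbitrary: v)
  case (pCons a p)
  have "T (pCons a p * q) v = a *s T q v + T (p * q) (\<theta> v)"
    by (simp add: T_add T_smult T_pCons)
  also have "\<dots> = T (pCons a p) (T q v)"
    using pCons.IH by (simp add: T_pCons T_\<theta>)
  finally show ?case .
qed simp

lemma T_commute: "T p (T q v) = T q (T p v)"
  by (metis T_mult mult.commute)

lemma mem_Ker_iff: "v \<in> Ker p \<longleftrightarrow> T p v = 0"
  by (simp add: Ker_p_def)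

lemma mem_Im_iff: "v \<in> Im p \<longleftrightarrow> (\<exists>w. v = T p w)"
  by (auto simp: Im_p_def)

lemma subspace_Ker: "subspace (Ker p)"
  using T.subspace_kernel by (simp add: Ker_p_def)

lemma subspace_Im: "subspace (Im p)"
  using T.subspace_image[OF subspace_UNIV] by (simp add: Im_p_def)

lemma Im_1 [simp]: "Im 1 = UNIV"
  by (simp add: Im_p_def)

lemma Im_mult: "Im (p * q) = T p ` Im q"
  by (auto simp: Im_p_def T_mult)

lemma Im_antimono: "p dvd q \<Longrightarrow> Im q \<subseteq> Im p"
  by (auto simp: Im_mult elim!: dvdE) (auto simp: Im_p_def)

lemma Ker_mono: "p dvd q \<Longrightarrow> Ker p \<subseteq> Ker q"
  by (auto simp: mem_Ker_iff T_mult elim!: dvdE) (metis T_commute T.zero)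

lemma Im_smult: "a \<noteq> 0 \<Longrightarrow> Im (smult a p) = Im p"
  by (intro antisym Im_antimono) (simp_all add: dvd_smult_iff smult_dvd_iff)

lemma Ker_smult: "a \<noteq> 0 \<Longrightarrow> Ker (smult a p) = Ker p"
  by (intro antisym Ker_mono) (simp_all add: dvd_smult_iff smult_dvd_iff)

lemma T_bezout:
  assumes "s * p + t * q = 1"
  shows "v = T s (T p v) + T t (T q v)"
  using arg_cong[OF assms, of "\<lambda>r. T r v"] by (simp add: T_add T_mult)

lemma Ker_subset_Im_if_coprime:
  assumes "coprime p q"
  shows "Ker p \<subseteq> Im q"
proof
  fix v assume "v \<in> Ker p"
  obtain s t where "s * p + t * q = 1"
    using assms by (auto simp: coprime_iff_bezout)
  then have "v = T s (T p v) + T q (T t v)"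
    using T_bezout T_commute[of t q v] by metis
  with \<open>v \<in> Ker p\<close> show "v \<in> Im q"
    by (auto simp: mem_Ker_iff mem_Im_iff)
qed

lemma Ker_inter_Ker_zero_if_coprime:
  assumes "coprime p q" "v \<in> Ker p" "v \<in> Ker q"
  shows "v = 0"
proof -
  obtain s t where "s * p + t * q = 1"
    using assms(1) by (auto simp: coprime_iff_bezout)
  then have "v = T s (T p v) + T t (T q v)"
    by (rule T_bezout)
  also have "\<dots> = 0"
    using assms(2,3) by (simp add: mem_Ker_iff)
  finally show ?thesis .
qed

lemma direct_sum2_Ker_mult:
  assumes "coprime p q"
  shows "direct_sum2 (Ker p) (Ker q) (Ker (p * q))"
proof -
  have "Ker (p * q) = {a + b | a b. a \<in> Ker p \<and> b \<in> Ker q}"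
  proof (intro equalityI subsetI)
    fix v assume v: "v \<in> Ker (p * q)"
    obtain s t where "s * p + t * q = 1"
      using assms by (auto simp: coprime_iff_bezout)
    then have "v = T t (T q v) + T s (T p v)"
      by (simp add: T_bezout add.commute)
    moreover have "T p (T t (T q v)) = T t (T (p * q) v)" "T q (T s (T p v)) = T s (T (p * q) v)"
      by (simp_all add: T_mult T_commute[of t p] T_commute[of q s] T_commute[of q p])
    with v have "T t (T q v) \<in> Ker p" "T s (T p v) \<in> Ker q"
      by (simp_all add: mem_Ker_iff)
    ultimately show "v \<in> {a + b | a b. a \<in> Ker p \<and> b \<in> Ker q}"
      by blast
  next
    fix v assume "v \<in> {a + b | a b. a \<in> Ker p \<and> b \<in> Ker q}"
    then obtain a b where "a \<in> Ker p" "b \<in> Ker q" "v = a + b"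
      by blast
    moreover have "a \<in> Ker (p * q)" "b \<in> Ker (p * q)"
      using Ker_mono[of p "p * q"] Ker_mono[of q "p * q"] \<open>a \<in> Ker p\<close> \<open>b \<in> Ker q\<close> by auto
    ultimately show "v \<in> Ker (p * q)"
      by (simp add: subspace_add[OF subspace_Ker])
  qed
  moreover have "a = 0 \<and> b = 0" if ab: "a \<in> Ker p" "b \<in> Ker q" "a + b = 0" for a b
  proof -
    from ab(3) have "a = - b"
      by (simp add: eq_neg_iff_add_eq_0)
    with ab(2) have "a \<in> Ker q"
      by (simp add: subspace_neg[OF subspace_Ker])
    with assms ab(1) have "a = 0"
      by (rule Ker_inter_Ker_zero_if_coprime)
    with ab(3) show ?thesis
      by simp
  qed
  ultimately show ?thesis
    unfolding direct_sum2_iff by blast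
qed

lemma internal_direct_sum_Ker_prod:
  assumes "finite D" "pairwise (\<lambda>i j. coprime (p i) (p j)) D"
  shows "internal_direct_sum D (\<lambda>i. Ker (p i)) (Ker (\<Prod>i\<in>D. p i))"
  using assms
proof (induction D rule: finite_induct)
  case empty
  have "Ker 1 = {0}"
    by (auto simp: mem_Ker_iff)
  then show ?case
    by (simp add: internal_direct_sum_def)
next
  case (insert i D)
  then have "coprime (p i) (\<Prod>j\<in>D. p j)"
    by (intro coprime_prod_right) (auto simp: pairwise_def)
  with insert show ?case
    by (auto intro: internal_direct_sum_insert direct_sum2_Ker_mult pairwise_subset)
qed

lemma Im_inter_Ker_zero:
  assumes "Ker (p * p) = Ker p" "v \<in> Im p" "v \<in> Ker p"
  shows "v = 0"
proof -
  obtain w where w: "v = T p w"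
    using assms(2) by (auto simp: mem_Im_iff)
  with assms(3) have "w \<in> Ker (p * p)"
    by (simp add: mem_Ker_iff T_mult)
  with assms(1) w show ?thesis
    by (simp add: mem_Ker_iff)
qed

lemma Im_plus_Ker:
  assumes "Im (p * p) = Im p"
  obtains a b where "a \<in> Im p" "b \<in> Ker p" "v = a + b"
proof -
  have "T p v \<in> Im (p * p)"
    using assms by (auto simp: mem_Im_iff)
  then obtain w where w: "T p v = T p (T p w)"
    by (auto simp: mem_Im_iff T_mult)
  have "T p w \<in> Im p" "v - T p w \<in> Ker p"
    using w by (auto simp: mem_Im_iff mem_Ker_iff T.diff)
  with that show ?thesis
    by force
qed

lemma direct_sum2_Im_Ker:
  assumes "Im (p * p) = Im p" "Ker (p * p) = Ker p"
  shows "direct_sum2 (Im p) (Ker p) UNIV"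
proof -
  have "UNIV = {a + b | a b. a \<in> Im p \<and> b \<in> Ker p}"
    using Im_plus_Ker[OF assms(1)] by blast
  moreover have "a = 0 \<and> b = 0" if ab: "a \<in> Im p" "b \<in> Ker p" "a + b = 0" for a b
  proof -
    from ab(3) have "a = - b"
      by (simp add: eq_neg_iff_add_eq_0)
    with ab(2) have "a \<in> Ker p"
      by (simp add: subspace_neg[OF subspace_Ker])
    with assms(2) ab(1) have "a = 0"
      by (rule Im_inter_Ker_zero)
    with ab(3) show ?thesis
      by simp
  qed
  ultimately show ?thesis
    unfolding direct_sum2_iff by blast
qed

lemma direct_sum2_Im_mult_Ker:
  assumes "coprime p q" "Ker (p * p) = Ker p"
    and "Im ((p * q) * (p * q)) = Im (p * q)" "Ker ((p * q) * (p * q)) = Ker (p * q)"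
  shows "direct_sum2 (Im (p * q)) (Ker q) (Im p)"
proof -
  have Im_pq: "Im (p * q) \<subseteq> Im p"
    by (rule Im_antimono) simp
  have Ker_q: "Ker q \<subseteq> Im p"
    using assms(1) by (simp add: Ker_subset_Im_if_coprime coprime_commute)
  have "Im p = {a + b | a b. a \<in> Im (p * q) \<and> b \<in> Ker q}"
  proof (intro equalityI subsetI)
    fix v assume v: "v \<in> Im p"
    obtain a k where a: "a \<in> Im (p * q)" and k: "k \<in> Ker (p * q)" and v_eq: "v = a + k"
      using Im_plus_Ker[OF assms(3)] by blast
    obtain k1 k2 where k1: "k1 \<in> Ker p" and k2: "k2 \<in> Ker q" and k_eq: "k = k1 + k2"
      using k direct_sum2_Ker_mult[OF assms(1)] by (auto simp: direct_sum2_iff)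
    have "k1 = v - a - k2"
      by (simp add: v_eq k_eq)
    also have "\<dots> \<in> Im p"
      using v a k2 Im_pq Ker_q by (blast intro: subspace_diff[OF subspace_Im])
    finally have "k1 = 0"
      using Im_inter_Ker_zero[OF assms(2)] k1 by blast
    with v_eq k_eq a k2 show "v \<in> {a + b | a b. a \<in> Im (p * q) \<and> b \<in> Ker q}"
      by auto
  qed (use Im_pq Ker_q in \<open>auto intro: subspace_add[OF subspace_Im]\<close>)
  moreover have "a = 0 \<and> b = 0" if ab: "a \<in> Im (p * q)" "b \<in> Ker q" "a + b = 0" for a b
  proof -
    from ab(3) have "a = - b"
      by (simp add: eq_neg_iff_add_eq_0)
    with ab(2) have "a \<in> Ker q"
      by (simp add: subspace_neg[OF subspace_Ker])
    then have "a \<in> Ker (p * q)"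
      using Ker_mono[of q "p * q"] by auto
    with assms(4) ab(1) have "a = 0"
      by (rule Im_inter_Ker_zero)
    with ab(3) show ?thesis
      by simp
  qed
  ultimately show ?thesis
    unfolding direct_sum2_iff by blast
qed

lemma Im_mult_absorb:
  assumes "Im (f ^ n) = Im (f ^ (n + 1))" "f ^ n dvd Y"
  shows "Im (Y * f) = Im Y"
proof -
  obtain Q where Y: "Y = f ^ n * Q"
    using assms(2) by (elim dvdE)
  have "Im (Y * f) = Im (Q * f ^ (n + 1))"
    by (simp add: Y mult_ac)
  also have "\<dots> = T Q ` Im (f ^ (n + 1))"
    by (rule Im_mult)
  also have "\<dots> = T Q ` Im (f ^ n)"
    using assms(1) by simp
  also have "\<dots> = Im Y"
    by (simp add: Y Im_mult mult.commute)
  finally show ?thesis .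
qed

lemma Ker_mult_absorb:
  assumes "Ker (f ^ n) = Ker (f ^ (n + 1))" "f ^ n dvd Y"
  shows "Ker (Y * f) = Ker Y"
proof (intro antisym subsetI)
  obtain Q where Y: "Y = f ^ n * Q"
    using assms(2) by (elim dvdE)
  fix v assume "v \<in> Ker (Y * f)"
  moreover have "T (f ^ (n + 1)) (T Q v) = T (Y * f) v"
    by (simp add: Y T_mult[symmetric] mult_ac)
  ultimately have "T Q v \<in> Ker (f ^ n)"
    unfolding assms(1) by (simp add: mem_Ker_iff)
  then show "v \<in> Ker Y"
    by (simp add: Y mem_Ker_iff T_mult)
qed (use Ker_mono[of Y "Y * f"] in auto)

lemma Ker_power_stable_if_annihilated:
  assumes "\<And>v. T (f ^ n * q) v = 0" "coprime f q"
  shows "Ker (f ^ n) = Ker (f ^ (n + 1))"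
proof (intro antisym subsetI)
  fix v assume v: "v \<in> Ker (f ^ (n + 1))"
  obtain s t where "s * f + t * q = 1"
    using assms(2) by (auto simp: coprime_iff_bezout)
  then have "f ^ n = f ^ n * (s * f + t * q)"
    by simp
  also have "\<dots> = s * f ^ (n + 1) + t * (f ^ n * q)"
    by (simp add: algebra_simps)
  finally have "T (f ^ n) v = T s (T (f ^ (n + 1)) v) + T t (T (f ^ n * q) v)"
    by (metis T_add T_mult)
  with v assms(1) show "v \<in> Ker (f ^ n)"
    by (simp add: mem_Ker_iff)
qed (use Ker_mono[of "f ^ n" "f ^ (n + 1)"] in auto)

lemma Ker_stable_if_C_endomorphism:
  assumes "kernel_config c d" "C_endomorphism scale c d \<theta>"
    and f: "f \<in> irr_monic" "c f \<noteq> 0" "c f < \<infinity>"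
  shows "Ker (f ^ the_enat (c f)) = Ker (f ^ (the_enat (c f) + 1))"
proof (cases "d < \<infinity>")
  case False
  with assms(2) f show ?thesis
    by (auto simp: C_endomorphism_def)
next
  case True
  let ?M = "{g \<in> irr_monic. c g \<noteq> 0}"
  have "finite ?M"
    using assms(1) True by (auto simp: kernel_config_def)
  moreover have "f \<in> ?M"
    using f by simp
  ultimately have "MiPo c = f ^ the_enat (c f) * powC c (?M - {f})"
    by (simp add: MiPo_def powC_def prod.remove)
  moreover have "coprime f (powC c (?M - {f}))"
    using f by (intro coprime_irr_monic_powC) auto
  ultimately show ?thesis
    using assms(2) True by (intro Ker_power_stable_if_annihilated) (auto simp: C_endomorphism_def)
qed

end

section \<open>Stationary kernel and image chains\<close>

locale stable_linear_endo = linear_endo scale \<theta>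
  for scale :: "'k::field \<Rightarrow> 'v::ab_group_add \<Rightarrow> 'v" and \<theta> +
  fixes c :: "'k poly \<Rightarrow> enat" and S :: "'k poly set"
  assumes S_irr_monic: "S \<subseteq> irr_monic"
    and Im_stable: "f \<in> S \<Longrightarrow> Im (f ^ the_enat (c f)) = Im (f ^ (the_enat (c f) + 1))"
    and Ker_stable: "f \<in> S \<Longrightarrow> Ker (f ^ the_enat (c f)) = Ker (f ^ (the_enat (c f) + 1))"
begin

lemma Im_powC_mult:
  assumes F: "finite F" "F \<subseteq> S" and "r \<noteq> 0"
    and factors: "\<And>g. g \<in> irr_monic \<Longrightarrow> g dvd r \<Longrightarrow> g \<in> F \<or> Im g = UNIV"
  shows "Im (powC c F * r) = Im (powC c F)"
proof -
  have absorb: "Im (Y * g) = Im Y" if g: "g \<in> irr_monic" "g dvd r" and P: "powC c F dvd Y" for g Y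
  proof (cases "g \<in> F")
    case True
    then have "g ^ the_enat (c g) dvd powC c F"
      unfolding powC_def using F(1) by blast
    with True F P show ?thesis
      by (intro Im_mult_absorb[OF Im_stable]) (auto intro: dvd_trans)
  next
    case False
    with factors g have "Im g = UNIV"
      by blast
    then show ?thesis
      by (simp add: Im_mult) (simp add: Im_p_def)
  qed
  show ?thesis
    by (rule monic_factors_absorbed[where \<Phi> = Im, OF assms(3) dvd_refl absorb Im_smult])
qed

lemma Im_eq_Im_powC_if_dvd:
  assumes "finite F" "F \<subseteq> S" "\<eta> \<noteq> 0" "powC c F dvd \<eta>"
    and "\<And>g. g \<in> irr_monic \<Longrightarrow> g dvd \<eta> \<Longrightarrow> g \<in> F \<or> Im g = UNIV"
  shows "Im \<eta> = Im (powC c F)"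
proof -
  obtain r where \<eta>: "\<eta> = powC c F * r"
    using assms(4) by (elim dvdE)
  show ?thesis
    unfolding \<eta> using assms \<eta> by (intro Im_powC_mult) (auto intro: dvd_mult)
qed

lemma powC_square_stable:
  assumes "finite F" "F \<subseteq> S"
  shows "Im (powC c F * powC c F) = Im (powC c F)" "Ker (powC c F * powC c F) = Ker (powC c F)"
proof -
  have F_irr: "F \<subseteq> irr_monic"
    using assms(2) S_irr_monic by blast
  then show "Im (powC c F * powC c F) = Im (powC c F)"
    using assms powC_nonzero irr_monic_dvd_powC by (intro Im_powC_mult) blast+
  have absorb: "Ker (Y * g) = Ker Y" if "g \<in> irr_monic" "g dvd powC c F" "powC c F dvd Y" for g Y
  proof -
    have "g \<in> F"
      using irr_monic_dvd_powC[OF that(1) F_irr that(2)] .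
    then have "g ^ the_enat (c g) dvd powC c F"
      unfolding powC_def using assms(1) by blast
    with \<open>g \<in> F\<close> assms(2) that(3) show ?thesis
      by (intro Ker_mult_absorb[OF Ker_stable]) (auto intro: dvd_trans)
  qed
  show "Ker (powC c F * powC c F) = Ker (powC c F)"
    by (rule monic_factors_absorbed[where \<Phi> = Ker, OF powC_nonzero[OF F_irr] dvd_refl absorb Ker_smult])
qed

lemma direct_sum_with_Im_powC:
  assumes "finite F'" "F \<subseteq> F'" "F' \<subseteq> S"
  shows "direct_sum_with (Im (powC c F')) (F' - F) (\<lambda>f. Ker (f ^ the_enat (c f))) (Im (powC c F))"
proof -
  have F: "finite F" "F \<subseteq> S" "F \<subseteq> irr_monic" and D: "finite (F' - F)" "F' - F \<subseteq> irr_monic"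
    using assms S_irr_monic finite_subset by auto
  have F'_eq: "powC c F' = powC c F * powC c (F' - F)"
    unfolding powC_def using assms(1,2) by (simp add: prod.subset_diff mult.commute)
  have "pairwise (\<lambda>i j. coprime (i ^ the_enat (c i)) (j ^ the_enat (c j))) (F' - F)"
  proof (rule pairwiseI)
    fix i j assume "i \<in> F' - F" "j \<in> F' - F" "i \<noteq> j"
    with D have "coprime (powC c {i}) (powC c {j})"
      by (intro coprime_powC) auto
    then show "coprime (i ^ the_enat (c i)) (j ^ the_enat (c j))"
      by (simp add: powC_def)
  qed
  with D(1) have "internal_direct_sum (F' - F) (\<lambda>f. Ker (f ^ the_enat (c f))) (Ker (powC c (F' - F)))"
    unfolding powC_def by (rule internal_direct_sum_Ker_prod)
  moreover have "direct_sum2 (Im (powC c F')) (Ker (powC c (F' - F))) (Im (powC c F))"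
    unfolding F'_eq
    using F D powC_square_stable[OF F(1,2)] powC_square_stable[OF assms(1,3), unfolded F'_eq]
    by (intro direct_sum2_Im_mult_Ker coprime_powC) auto
  ultimately show ?thesis
    by (rule direct_sum_with_if_direct_sum2)
qed

end

lemma stable_linear_endo_if_C_endomorphism:
  assumes "vector_space sc" "Vector_Spaces.linear sc sc \<theta>"
    and "kernel_config c d" "C_endomorphism sc c d \<theta>" "C_image_complete sc c \<theta>"
  shows "stable_linear_endo sc \<theta> c {f \<in> irr_monic. 0 < c f \<and> c f < \<infinity>}"
proof -
  interpret linear_endo sc \<theta>
    using assms(1,2) by (simp add: linear_endo_def linear_endo_axioms_def)
  show ?thesis
  proof
    fix f assume f: "f \<in> {f \<in> irr_monic. 0 < c f \<and> c f < \<infinity>}"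
    with assms(5) show "Im_p sc \<theta> (f ^ the_enat (c f)) = Im_p sc \<theta> (f ^ (the_enat (c f) + 1))"
      by (auto simp: C_image_complete_def)
    from f show "Ker_p sc \<theta> (f ^ the_enat (c f)) = Ker_p sc \<theta> (f ^ (the_enat (c f) + 1))"
      by (intro Ker_stable_if_C_endomorphism[OF assms(3,4)]) auto
  qed auto
qed

theorem lemma3p13:
  fixes sc :: "'k::field \<Rightarrow> 'v::ab_group_add \<Rightarrow> 'v"
    and \<theta> :: "'v \<Rightarrow> 'v"
    and c :: "'k poly \<Rightarrow> enat" and d :: enat
    and F :: "'k poly set"
  assumes VS: "vector_space sc"
    and lin: "Vector_Spaces.linear sc sc \<theta>"
    and KC: "kernel_config c d"
    and endo: "C_endomorphism sc c d \<theta>"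
    and imc: "C_image_complete sc c \<theta>"
    and finF: "finite F"
    and Fsub: "F \<subseteq> {f \<in> irr_monic. 0 < c f \<and> c f < \<infinity>}"
  shows "(\<forall>\<eta>. \<eta> \<noteq> 0 \<and> powC c F dvd \<eta> \<and>
              (\<forall>g \<in> irr_monic. g dvd \<eta> \<longrightarrow> c g = 0 \<or> g \<in> F)
            \<longrightarrow> Im_p sc \<theta> \<eta> = Im_p sc \<theta> (powC c F))
    \<and> direct_sum2 (Im_p sc \<theta> (powC c F)) (Ker_p sc \<theta> (powC c F)) UNIV
    \<and> direct_sum_with (Im_p sc \<theta> (powC c F)) F
          (\<lambda>f. Ker_p sc \<theta> (f ^ the_enat (c f))) UNIV
    \<and> (\<forall>F'. finite F' \<and> F \<subseteq> F' \<and> F' \<subseteq> {f \<in> irr_monic. 0 < c f \<and> c f < \<infinity>} \<longrightarrow>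
          direct_sum_with (Im_p sc \<theta> (powC c F')) (F' - F)
            (\<lambda>f. Ker_p sc \<theta> (f ^ the_enat (c f))) (Im_p sc \<theta> (powC c F)))
    \<and> (\<forall>g \<in> F. direct_sum_with (Im_p sc \<theta> (powC c F)) (F - {g})
            (\<lambda>f. Ker_p sc \<theta> (f ^ the_enat (c f))) (Im_p sc \<theta> (g ^ the_enat (c g))))"
proof -
  let ?S = "{f \<in> irr_monic. 0 < c f \<and> c f < \<infinity>}"
    and ?P = "powC c F" and ?K = "\<lambda>f. Ker_p sc \<theta> (f ^ the_enat (c f))"
  interpret stable_linear_endo sc \<theta> c ?S
    using VS lin KC endo imc by (rule stable_linear_endo_if_C_endomorphism)
  \<comment> \<open>at exponent C(g) = 0, image completeness compares Im 1 = V with Im g\<close>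
  have onto: "Im_p sc \<theta> g = UNIV" if "g \<in> irr_monic" "c g = 0" for g
    using imc that by (auto simp: C_image_complete_def zero_enat_def)
  have "\<forall>\<eta>. \<eta> \<noteq> 0 \<and> ?P dvd \<eta> \<and> (\<forall>g \<in> irr_monic. g dvd \<eta> \<longrightarrow> c g = 0 \<or> g \<in> F)
      \<longrightarrow> Im_p sc \<theta> \<eta> = Im_p sc \<theta> ?P"
  proof (intro allI impI)
    fix \<eta> assume "\<eta> \<noteq> 0 \<and> ?P dvd \<eta> \<and> (\<forall>g \<in> irr_monic. g dvd \<eta> \<longrightarrow> c g = 0 \<or> g \<in> F)"
    with finF Fsub onto show "Im_p sc \<theta> \<eta> = Im_p sc \<theta> ?P"
      by (intro Im_eq_Im_powC_if_dvd) auto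
  qed
  moreover have "direct_sum2 (Im_p sc \<theta> ?P) (Ker_p sc \<theta> ?P) UNIV"
    using powC_square_stable[OF finF Fsub] by (rule direct_sum2_Im_Ker)
  moreover have "direct_sum_with (Im_p sc \<theta> ?P) F ?K UNIV"
    using direct_sum_with_Im_powC[OF finF empty_subsetI Fsub] by (simp add: powC_def)
  moreover have "\<forall>F'. finite F' \<and> F \<subseteq> F' \<and> F' \<subseteq> ?S
      \<longrightarrow> direct_sum_with (Im_p sc \<theta> (powC c F')) (F' - F) ?K (Im_p sc \<theta> ?P)"
    using direct_sum_with_Im_powC by blast
  moreover have "\<forall>g \<in> F. direct_sum_with (Im_p sc \<theta> ?P) (F - {g}) ?K (Im_p sc \<theta> (g ^ the_enat (c g)))"
    using direct_sum_with_Im_powC[OF finF _ Fsub, of "{g}" for g] by (simp add: powC_def)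
  ultimately show ?thesis
    by (intro conjI)
qed

end
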